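(* Let $d\ge1$, $N\ge1$, $T>0$, let $\mathcal{K}:\mathbb{R}^d\to\mathbb{R}^d$ be Lipschitz continuous and compactly supported in $B_R(0)$, and for $\alpha,\beta\in\mathbb{R}$ let $K^N_{\alpha,\beta}(z)=N^{-\alpha}\mathcal{K}(z/N^\beta)$. Assume the desired velocity vanishes, $v_\textup{d}\equiv0$. Let $\alpha,\beta,\alpha',\beta'\in\mathbb{R}$ with $\alpha+\beta=\alpha'+\beta'$, let $U^N(z)=N^{\beta'-\beta}z$, and let $\mu^N_\cdot,\nu^N_\cdot\in C([0,T];\mathcal{M}^N_1(\mathbb{R}^d))$ be the solutions of the Cauchy problem with interaction kernels $K^N_{\alpha,\beta}$ and $K^N_{\alpha',\beta'}$ respectively, and initial data $\bar\mu^N$ and $\bar\nu^N=U^N\#\bar\mu^N$ in $\mathcal{M}^N_1(\mathbb{R}^d)$. Then $\nu^N_t=U^N\#\mu^N_t$ for all $t\in(0,T]$.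
   Context: $\mathcal{M}^N_1(\mathbb{R}^d)$ is the set of positive Borel measures on $\mathbb{R}^d$ with total mass $N$ and finite first moment; $\#$ denotes push-forward. With interaction kernel $K$ and $v_\textup{d}\equiv0$, the velocity is $v[\mu](x)=-\int K(y-x)\,d\mu(y)$. A solution of the Cauchy problem $\partial_t\mu_t+\nabla\cdot(\mu_tv[\mu_t])=0$, $\mu_0=\bar\mu$, on $[0,T]$ is a curve $\mu_\cdot\in C([0,T];\mathcal{M}^N_1(\mathbb{R}^d))$ given by $\mu_t=\gamma_t\#\bar\mu$, where the flow map satisfies $\gamma_t(x)=x+\int_0^tv[\mu_s](\gamma_s(x))\,ds$. *)

theory Defs
  imports "HOL-Analysis.Analysis"
begin

definition meas_N1 :: "nat \<Rightarrow> 'a::euclidean_space measure set" where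
  "meas_N1 N = {\<mu>. sets \<mu> = sets borel \<and> emeasure \<mu> (space \<mu>) = of_nat N
                  \<and> integrable \<mu> (\<lambda>x. norm x)}"

text \<open>Wasserstein-1 distance (for equal masses) via Kantorovich--Rubinstein duality.\<close>
definition W1 :: "'a::euclidean_space measure \<Rightarrow> 'a measure \<Rightarrow> real" where
  "W1 \<mu> \<nu> = (SUP f \<in> {f :: 'a \<Rightarrow> real. 1-lipschitz_on UNIV f}.
                 integral\<^sup>L \<mu> f - integral\<^sup>L \<nu> f)"

definition cont_curve :: "real \<Rightarrow> nat \<Rightarrow> (real \<Rightarrow> 'a::euclidean_space measure) \<Rightarrow> bool" where
  "cont_curve T N \<mu> \<longleftrightarrow> (\<forall>t\<in>{0..T}. \<mu> t \<in> meas_N1 N) \<and>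
     (\<forall>t\<in>{0..T}. ((\<lambda>s. W1 (\<mu> s) (\<mu> t)) \<longlongrightarrow> 0) (at t within {0..T}))"

text \<open>Velocity field v[mu](x) = - int K(y - x) d mu(y) (desired velocity zero).\<close>
definition vel :: "('a::euclidean_space \<Rightarrow> 'a) \<Rightarrow> 'a measure \<Rightarrow> 'a \<Rightarrow> 'a" where
  "vel K \<mu> x = - integral\<^sup>L \<mu> (\<lambda>y. K (y - x))"

definition is_solution ::
  "real \<Rightarrow> nat \<Rightarrow> ('a::euclidean_space \<Rightarrow> 'a) \<Rightarrow> 'a measure \<Rightarrow> (real \<Rightarrow> 'a measure) \<Rightarrow> bool" where
  "is_solution T N K \<mu>0 \<mu> \<longleftrightarrow> cont_curve T N \<mu> \<and>
     (\<exists>\<gamma> :: real \<Rightarrow> 'a \<Rightarrow> 'a.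
        (\<forall>t\<in>{0..T}. \<gamma> t \<in> borel_measurable borel \<and> \<mu> t = distr \<mu>0 borel (\<gamma> t)) \<and>
        (\<forall>t\<in>{0..T}. \<forall>x. (\<lambda>s. vel K (\<mu> s) (\<gamma> s x)) integrable_on {0..t} \<and>
                         \<gamma> t x = x + integral {0..t} (\<lambda>s. vel K (\<mu> s) (\<gamma> s x))))"

definition scaled_kernel :: "('a::euclidean_space \<Rightarrow> 'a) \<Rightarrow> nat \<Rightarrow> real \<Rightarrow> real \<Rightarrow> 'a \<Rightarrow> 'a" where
  "scaled_kernel K N \<alpha> \<beta> z = (real N powr (-\<alpha>)) *\<^sub>R K ((1 / real N powr \<beta>) *\<^sub>R z)"

end

theory Submission
  imports Defs
begin

text \<open>
  Pull both flows back to the reference measure \<open>\<mu>0\<close>. If \<open>\<gamma>\<close> and \<open>\<eta>\<close> are the flow maps of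
  \<open>\<mu>\<close> and \<open>\<nu>\<close>, then \<open>\<eta>_t \<circ> U\<close> and \<open>U \<circ> \<gamma>_t\<close> both push \<open>\<mu>0\<close> forward to the current measure
  and solve the same integral equation, with kernel \<open>K' = K^N_{\<alpha>',\<beta>'}\<close> and initial map \<open>U\<close>.
  For \<open>U \<circ> \<gamma>_t\<close> this is the scaling identity \<open>K'(c z) = c K^N_{\<alpha>,\<beta>}(z)\<close> with \<open>c = N^(\<beta>'-\<beta>)\<close>,
  which is exactly where \<open>\<alpha> + \<beta> = \<alpha>' + \<beta>'\<close> enters. As \<open>K'\<close> is bounded and Lipschitz and \<open>\<mu>0\<close> is
  finite, Picard iteration bounds the distance of the two maps by \<open>M (k t)^n / n!\<close> for every \<open>n\<close>,
  so they coincide and \<open>\<nu>_t = U # \<mu>_t\<close>.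
\<close>

lemma vel_distr:
  assumes "sets \<mu> = sets borel" and "g \<in> borel_measurable borel" and "K \<in> borel_measurable borel"
  shows "vel K (distr \<mu> borel g) z = - (LINT y|\<mu>. K (g y - z))"
proof -
  have "g \<in> measurable \<mu> borel" using assms(2) by (simp add: measurable_cong_sets[OF assms(1) refl])
  moreover have "(\<lambda>y. K (y - z)) \<in> borel_measurable borel"
    using measurable_compose[OF _ assms(3), of "\<lambda>y. y - z"] by simp
  ultimately show ?thesis unfolding vel_def by (simp add: integral_distr)
qed

lemma vel_distr_scaleR:
  fixes K K' :: "'a::euclidean_space \<Rightarrow> 'a"
  assumes "sets \<mu> = sets borel" and "g \<in> borel_measurable borel"
    and "K \<in> borel_measurable borel" and "K' \<in> borel_measurable borel"
    and "\<And>z. K' (c *\<^sub>R z) = c *\<^sub>R K z"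
  shows "vel K' (distr \<mu> borel (\<lambda>y. c *\<^sub>R g y)) (c *\<^sub>R w) = c *\<^sub>R vel K (distr \<mu> borel g) w"
proof -
  have "(\<lambda>y. c *\<^sub>R g y) \<in> borel_measurable borel"
    using assms(2) by (rule borel_measurable_scaleR[OF borel_measurable_const])
  then have "vel K' (distr \<mu> borel (\<lambda>y. c *\<^sub>R g y)) (c *\<^sub>R w) = - (LINT y|\<mu>. K' (c *\<^sub>R (g y - w)))"
    using assms by (simp add: vel_distr scaleR_diff_right)
  also have "\<dots> = c *\<^sub>R vel K (distr \<mu> borel g) w"
    using assms by (simp add: vel_distr)
  finally show ?thesis .
qed

lemma norm_vel_distr_le:
  fixes K :: "'a::euclidean_space \<Rightarrow> 'a"
  assumes "finite_measure \<mu>" and "sets \<mu> = sets borel"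
    and "g \<in> borel_measurable borel" and "K \<in> borel_measurable borel" and "\<And>z. norm (K z) \<le> B"
  shows "norm (vel K (distr \<mu> borel g) z) \<le> B * measure \<mu> (space \<mu>)"
proof -
  interpret finite_measure \<mu> by fact
  have "g \<in> borel_measurable \<mu>" using assms(3) by (simp add: measurable_cong_sets[OF assms(2) refl])
  then have "integrable \<mu> (\<lambda>y. K (g y - z))"
    using assms(4,5) by (intro integrable_const_bound[where B=B]) auto
  then have "norm (LINT y|\<mu>. K (g y - z)) \<le> (LINT y|\<mu>. B)"
    using assms(5) by (intro order_trans[OF integral_norm_bound] integral_mono integrable_norm) auto
  with assms(2-4) show ?thesis by (simp add: vel_distr mult.commute)
qed

lemma norm_vel_distr_diff_le:
  fixes K :: "'a::euclidean_space \<Rightarrow> 'a"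
  assumes "finite_measure \<mu>" and "sets \<mu> = sets borel"
    and "g \<in> borel_measurable borel" and "h \<in> borel_measurable borel"
    and "L-lipschitz_on UNIV K" and "\<And>z. norm (K z) \<le> B"
    and "\<And>y. norm (g y - h y) \<le> D"
  shows "norm (vel K (distr \<mu> borel g) (g x) - vel K (distr \<mu> borel h) (h x))
           \<le> 2 * L * measure \<mu> (space \<mu>) * D"
proof -
  interpret finite_measure \<mu> by fact
  have Km: "K \<in> borel_measurable borel"
    using assms(5) by (intro borel_measurable_continuous_onI lipschitz_on_continuous_on)
  have "g \<in> borel_measurable \<mu>" "h \<in> borel_measurable \<mu>"
    using assms(3,4) by (simp_all add: measurable_cong_sets[OF assms(2) refl])
  then have ig: "integrable \<mu> (\<lambda>y. K (g y - g x))" and ih: "integrable \<mu> (\<lambda>y. K (h y - h x))"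
    using Km assms(6) by (auto intro!: integrable_const_bound[where B=B])
  have pointwise: "norm (K (g y - g x) - K (h y - h x)) \<le> 2 * L * D" for y
  proof -
    have "norm (K (g y - g x) - K (h y - h x)) \<le> L * norm ((g y - g x) - (h y - h x))"
      by (rule lipschitz_on_normD[OF assms(5)]) auto
    also have "\<dots> = L * norm ((g y - h y) - (g x - h x))"
      by (simp add: algebra_simps)
    also have "\<dots> \<le> L * (2 * D)"
      using assms(7)[of y] assms(7)[of x] lipschitz_on_nonneg[OF assms(5)]
      by (intro mult_left_mono order.trans[OF norm_triangle_ineq4]) auto
    finally show ?thesis by simp
  qed
  have "norm (LINT y|\<mu>. K (g y - g x) - K (h y - h x)) \<le> (LINT y|\<mu>. 2 * L * D)"
    using ig ih pointwise
    by (intro order_trans[OF integral_norm_bound] integral_mono integrable_norm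
        Bochner_Integration.integrable_diff) auto
  then show ?thesis
    using assms(2-4) Km ig ih by (simp add: vel_distr norm_minus_commute mult_ac)
qed

lemma power_has_integral_Icc0:
  fixes t :: real assumes "0 \<le> t"
  shows "((\<lambda>s. s ^ n) has_integral t ^ Suc n / Suc n) {0..t}"
proof -
  have "((\<lambda>s. s ^ Suc n / Suc n) has_real_derivative s ^ n) (at s within {0..t})" for s
    using DERIV_cdivide[OF DERIV_pow[of "Suc n" s], of "Suc n"] by (simp del: of_nat_Suc)
  then have "((\<lambda>s. s ^ n) has_integral t ^ Suc n / Suc n - 0 ^ Suc n / Suc n) {0..t}"
    using assms by (intro fundamental_theorem_of_calculus)
      (auto simp flip: has_real_derivative_iff_has_vector_derivative)
  then show ?thesis by simp
qed

lemma picard_iteration_vanishes: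
  fixes e :: "real \<Rightarrow> 'b \<Rightarrow> real"
  assumes nonneg: "\<And>t x. 0 \<le> e t x"
    and base: "\<And>t x. t \<in> {0..T} \<Longrightarrow> e t x \<le> M"
    and step: "\<And>n C. (\<And>s y. s \<in> {0..T} \<Longrightarrow> e s y \<le> C * s ^ n) \<Longrightarrow>
                 (\<And>t x. t \<in> {0..T} \<Longrightarrow> e t x \<le> k * C * t ^ Suc n / Suc n)"
    and "t \<in> {0..T}"
  shows "e t x = 0"
proof -
  have bound: "e t x \<le> M * k ^ n / fact n * t ^ n" if "t \<in> {0..T}" for n t x
    using that
  proof (induction n arbitrary: t x)
    case 0
    then show ?case using base by simp
  next
    case (Suc n)
    then have "e t x \<le> k * (M * k ^ n / fact n) * t ^ Suc n / Suc n"
      by (intro step) auto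
    then show ?case by (simp add: field_simps del: of_nat_Suc)
  qed
  have "(\<lambda>n. M * (inverse (fact n) * (k * t) ^ n)) \<longlonglongrightarrow> 0"
    by (intro tendsto_mult_right_zero summable_LIMSEQ_zero summable_exp)
  then have "(\<lambda>n. M * k ^ n / fact n * t ^ n) \<longlonglongrightarrow> 0"
    by (simp add: power_mult_distrib field_simps)
  then have "e t x \<le> 0"
    using bound[OF assms(4)] by (intro tendsto_le[OF trivial_limit_sequentially]) auto
  then show ?thesis using nonneg[of t x] by simp
qed

text \<open>
  The flow is written over a fixed reference measure \<open>\<mu>0\<close> (the measure at time \<open>s\<close> is
  \<open>a s # \<mu>0\<close>) and may start at any map \<open>p\<close>, so that \<open>\<eta>_t \<circ> U\<close> and \<open>U \<circ> \<gamma>_t\<close> become solutions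
  of one and the same problem.
\<close>
definition lagrangian_solution ::
  "real \<Rightarrow> ('a::euclidean_space \<Rightarrow> 'a) \<Rightarrow> 'a measure \<Rightarrow> ('a \<Rightarrow> 'a) \<Rightarrow>
    (real \<Rightarrow> 'a \<Rightarrow> 'a) \<Rightarrow> bool"
where
  "lagrangian_solution T K \<mu>0 p a \<longleftrightarrow>
     (\<forall>t\<in>{0..T}. a t \<in> borel_measurable borel) \<and>
     (\<forall>t\<in>{0..T}. \<forall>x. (\<lambda>s. vel K (distr \<mu>0 borel (a s)) (a s x)) integrable_on {0..t} \<and>
        a t x = p x + integral {0..t} (\<lambda>s. vel K (distr \<mu>0 borel (a s)) (a s x)))"

lemma is_solution_imp_lagrangian_solution:
  assumes "is_solution T N K \<mu>0 \<mu>"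
  obtains \<gamma> where "lagrangian_solution T K \<mu>0 (\<lambda>x. x) \<gamma>"
    and "\<And>t. t \<in> {0..T} \<Longrightarrow> \<mu> t = distr \<mu>0 borel (\<gamma> t)"
proof -
  from assms obtain \<gamma> where
    push: "\<forall>t\<in>{0..T}. \<gamma> t \<in> borel_measurable borel \<and> \<mu> t = distr \<mu>0 borel (\<gamma> t)" and
    flow: "\<forall>t\<in>{0..T}. \<forall>x. (\<lambda>s. vel K (\<mu> s) (\<gamma> s x)) integrable_on {0..t} \<and>
                   \<gamma> t x = x + integral {0..t} (\<lambda>s. vel K (\<mu> s) (\<gamma> s x))"
    unfolding is_solution_def by blast
  have "lagrangian_solution T K \<mu>0 (\<lambda>x. x) \<gamma>"
    unfolding lagrangian_solution_def
  proof (intro conjI ballI allI)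
    fix t x assume t: "t \<in> {0..T}"
    have eq: "vel K (\<mu> s) (\<gamma> s x) = vel K (distr \<mu>0 borel (\<gamma> s)) (\<gamma> s x)" if "s \<in> {0..t}" for s
      using push that t by auto
    have "(\<lambda>s. vel K (\<mu> s) (\<gamma> s x)) integrable_on {0..t}"
      using flow t by blast
    then show "(\<lambda>s. vel K (distr \<mu>0 borel (\<gamma> s)) (\<gamma> s x)) integrable_on {0..t}"
      by (rule integrable_eq) (rule eq)
    have "\<gamma> t x = x + integral {0..t} (\<lambda>s. vel K (\<mu> s) (\<gamma> s x))"
      using flow t by blast
    also have "integral {0..t} (\<lambda>s. vel K (\<mu> s) (\<gamma> s x))
        = integral {0..t} (\<lambda>s. vel K (distr \<mu>0 borel (\<gamma> s)) (\<gamma> s x))"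
      by (rule integral_cong) (rule eq)
    finally show "\<gamma> t x = x + integral {0..t} (\<lambda>s. vel K (distr \<mu>0 borel (\<gamma> s)) (\<gamma> s x))" .
  qed (use push in blast)
  then show thesis by (rule that) (use push in blast)
qed

lemma lagrangian_solution_precompose:
  assumes a: "lagrangian_solution T K (distr \<mu>0 borel U) p a"
    and sets: "sets \<mu>0 = sets borel" and U: "U \<in> borel_measurable borel"
  shows "lagrangian_solution T K \<mu>0 (\<lambda>x. p (U x)) (\<lambda>t x. a t (U x))"
  unfolding lagrangian_solution_def
proof (intro conjI ballI allI)
  fix t x assume t: "t \<in> {0..T}"
  have meas: "a s \<in> borel_measurable borel" if "s \<in> {0..T}" for s
    using a that unfolding lagrangian_solution_def by blast
  show "(\<lambda>x. a t (U x)) \<in> borel_measurable borel"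
    using measurable_compose[OF U meas[OF t]] by (simp add: comp_def)
  have eq: "vel K (distr (distr \<mu>0 borel U) borel (a s)) (a s (U x))
      = vel K (distr \<mu>0 borel (\<lambda>x. a s (U x))) (a s (U x))" if "s \<in> {0..t}" for s
    using meas[of s] that t U
    by (simp add: distr_distr measurable_cong_sets[OF sets refl] comp_def)
  have "(\<lambda>s. vel K (distr (distr \<mu>0 borel U) borel (a s)) (a s (U x))) integrable_on {0..t}"
    and a_eq: "a t (U x) = p (U x) +
      integral {0..t} (\<lambda>s. vel K (distr (distr \<mu>0 borel U) borel (a s)) (a s (U x)))"
    using a t unfolding lagrangian_solution_def by blast+
  then show "(\<lambda>s. vel K (distr \<mu>0 borel (\<lambda>x. a s (U x))) (a s (U x))) integrable_on {0..t}"
    by (intro integrable_eq[OF _ eq])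
  show "a t (U x) = p (U x) + integral {0..t} (\<lambda>s. vel K (distr \<mu>0 borel (\<lambda>x. a s (U x))) (a s (U x)))"
    unfolding a_eq by (simp only: integral_cong[OF eq])
qed

lemma lagrangian_solution_scaleR:
  fixes K K' :: "'a::euclidean_space \<Rightarrow> 'a"
  assumes a: "lagrangian_solution T K \<mu>0 p a" and sets: "sets \<mu>0 = sets borel"
    and "K \<in> borel_measurable borel" and "K' \<in> borel_measurable borel"
    and "\<And>z. K' (c *\<^sub>R z) = c *\<^sub>R K z"
  shows "lagrangian_solution T K' \<mu>0 (\<lambda>x. c *\<^sub>R p x) (\<lambda>t x. c *\<^sub>R a t x)"
  unfolding lagrangian_solution_def
proof (intro conjI ballI allI)
  fix t x assume t: "t \<in> {0..T}"
  have meas: "a s \<in> borel_measurable borel" if "s \<in> {0..T}" for s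
    using a that unfolding lagrangian_solution_def by blast
  show "(\<lambda>x. c *\<^sub>R a t x) \<in> borel_measurable borel"
    using meas[OF t] by (rule borel_measurable_scaleR[OF borel_measurable_const])
  have eq: "c *\<^sub>R vel K (distr \<mu>0 borel (a s)) (a s x)
      = vel K' (distr \<mu>0 borel (\<lambda>y. c *\<^sub>R a s y)) (c *\<^sub>R a s x)" if "s \<in> {0..t}" for s
    using vel_distr_scaleR[OF sets meas assms(3-5)] that t by simp
  have "(\<lambda>s. vel K (distr \<mu>0 borel (a s)) (a s x)) integrable_on {0..t}"
    and a_eq: "a t x = p x + integral {0..t} (\<lambda>s. vel K (distr \<mu>0 borel (a s)) (a s x))"
    using a t unfolding lagrangian_solution_def by blast+
  then show "(\<lambda>s. vel K' (distr \<mu>0 borel (\<lambda>y. c *\<^sub>R a s y)) (c *\<^sub>R a s x)) integrable_on {0..t}"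
    by (intro integrable_eq[OF integrable_cmul eq])
  have "c *\<^sub>R a t x = c *\<^sub>R p x + integral {0..t} (\<lambda>s. c *\<^sub>R vel K (distr \<mu>0 borel (a s)) (a s x))"
    by (subst a_eq) (simp add: scaleR_add_right)
  also have "integral {0..t} (\<lambda>s. c *\<^sub>R vel K (distr \<mu>0 borel (a s)) (a s x))
      = integral {0..t} (\<lambda>s. vel K' (distr \<mu>0 borel (\<lambda>y. c *\<^sub>R a s y)) (c *\<^sub>R a s x))"
    by (rule integral_cong) (rule eq)
  finally show "c *\<^sub>R a t x = c *\<^sub>R p x +
      integral {0..t} (\<lambda>s. vel K' (distr \<mu>0 borel (\<lambda>y. c *\<^sub>R a s y)) (c *\<^sub>R a s x))" .
qed

lemma lagrangian_solution_unique:
  fixes K :: "'a::euclidean_space \<Rightarrow> 'a"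
  assumes a: "lagrangian_solution T K \<mu>0 p a" and b: "lagrangian_solution T K \<mu>0 p b"
    and fin: "finite_measure \<mu>0" and sets: "sets \<mu>0 = sets borel"
    and lip: "L-lipschitz_on UNIV K" and bdd: "\<And>z. norm (K z) \<le> B"
    and "t \<in> {0..T}"
  shows "a t x = b t x"
proof -
  define m where "m = measure \<mu>0 (space \<mu>0)"
  define w where "w s x = vel K (distr \<mu>0 borel (a s)) (a s x) - vel K (distr \<mu>0 borel (b s)) (b s x)"
    for s x
  have Km: "K \<in> borel_measurable borel"
    using lip by (intro borel_measurable_continuous_onI lipschitz_on_continuous_on)
  have Bm: "0 \<le> B * m"
    using order_trans[OF norm_ge_zero bdd] by (simp add: m_def)
  have meas: "a s \<in> borel_measurable borel" "b s \<in> borel_measurable borel" if "s \<in> {0..T}" for s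
    using a b that unfolding lagrangian_solution_def by auto
  have w_integrable: "(\<lambda>s. w s x) integrable_on {0..t}"
    and a_minus_b: "a t x - b t x = integral {0..t} (\<lambda>s. w s x)" if "t \<in> {0..T}" for t x
    using a b that unfolding lagrangian_solution_def w_def by (auto intro: integrable_diff simp: integral_diff)
  have estimate: "norm (a t x - b t x) \<le> integral {0..t} f"
    if "t \<in> {0..T}" and "f integrable_on {0..t}" and "\<And>s. s \<in> {0..t} \<Longrightarrow> norm (w s x) \<le> f s"
    for t x f
    unfolding a_minus_b[OF that(1)]
    using w_integrable[OF that(1)] that(2,3) by (rule integral_norm_bound_integral)
  have base: "norm (a t x - b t x) \<le> 2 * B * m * T" if t: "t \<in> {0..T}" for t x
  proof -
    have "norm (w s x) \<le> 2 * B * m" if "s \<in> {0..t}" for s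
    proof -
      have s: "s \<in> {0..T}" using that t by auto
      have "norm (w s x) \<le>
          norm (vel K (distr \<mu>0 borel (a s)) (a s x)) + norm (vel K (distr \<mu>0 borel (b s)) (b s x))"
        unfolding w_def by (rule norm_triangle_ineq4)
      also have "\<dots> \<le> B * m + B * m"
        unfolding m_def
        using norm_vel_distr_le[OF fin sets meas(1)[OF s] Km bdd]
          norm_vel_distr_le[OF fin sets meas(2)[OF s] Km bdd]
        by (rule add_mono)
      finally show ?thesis by simp
    qed
    then have "norm (a t x - b t x) \<le> integral {0..t} (\<lambda>_. 2 * B * m)"
      by (intro estimate[OF t]) auto
    also have "\<dots> = 2 * B * m * t"
      using t by simp
    also have "\<dots> \<le> 2 * B * m * T"
      using t Bm by (intro mult_left_mono) auto
    finally show ?thesis .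
  qed
  have step: "norm (a t x - b t x) \<le> 2 * L * m * C * t ^ Suc n / Suc n"
    if IH: "\<And>s y. s \<in> {0..T} \<Longrightarrow> norm (a s y - b s y) \<le> C * s ^ n" and t: "t \<in> {0..T}"
    for n C t x
  proof -
    have C_int: "((\<lambda>s. 2 * L * m * C * s ^ n) has_integral 2 * L * m * C * (t ^ Suc n / Suc n)) {0..t}"
      using t by (intro has_integral_mult_right power_has_integral_Icc0) simp
    have "norm (w s x) \<le> 2 * L * m * C * s ^ n" if "s \<in> {0..t}" for s
      using norm_vel_distr_diff_le[OF fin sets meas lip bdd IH] that t
      unfolding w_def m_def by (auto simp: mult.assoc)
    then have "norm (a t x - b t x) \<le> integral {0..t} (\<lambda>s. 2 * L * m * C * s ^ n)"
      using C_int by (intro estimate[OF t]) (auto intro: has_integral_integrable)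
    also have "\<dots> = 2 * L * m * C * (t ^ Suc n / Suc n)"
      using C_int by (rule integral_unique)
    finally show ?thesis by simp
  qed
  have "norm (a t x - b t x) = 0"
    using picard_iteration_vanishes[where e = "\<lambda>t x. norm (a t x - b t x)", OF _ base step assms(7)]
    by simp
  then show ?thesis by simp
qed

lemma norm_le_of_lipschitz_vanishing_outside_ball:
  fixes K :: "'a::euclidean_space \<Rightarrow> 'b::real_normed_vector"
  assumes "L-lipschitz_on UNIV K" and "\<forall>z. z \<notin> ball 0 R \<longrightarrow> K z = 0" and "0 < R"
  shows "norm (K z) \<le> norm (K 0) + L * R"
proof (cases "z \<in> ball 0 R")
  case True
  have "norm (K z - K 0) \<le> L * norm z"
    using lipschitz_on_normD[OF assms(1), of z 0] by simp
  also have "\<dots> \<le> L * R"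
    using True lipschitz_on_nonneg[OF assms(1)] by (intro mult_left_mono) auto
  finally show ?thesis using norm_triangle_ineq2[of "K z" "K 0"] by simp
next
  case False
  then show ?thesis using assms lipschitz_on_nonneg[OF assms(1)] by simp
qed

lemma lipschitz_on_scaled_kernel:
  fixes K :: "'a::euclidean_space \<Rightarrow> 'a"
  assumes "L-lipschitz_on UNIV K" and "0 < N"
  shows "(real N powr (-\<alpha>) * L / real N powr \<beta>)-lipschitz_on UNIV (scaled_kernel K N \<alpha> \<beta>)"
proof (rule lipschitz_onI)
  show "0 \<le> real N powr (-\<alpha>) * L / real N powr \<beta>"
    using lipschitz_on_nonneg[OF assms(1)] by simp
  fix x y :: 'a
  have "dist (K ((1 / real N powr \<beta>) *\<^sub>R x)) (K ((1 / real N powr \<beta>) *\<^sub>R y))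
      \<le> L * dist ((1 / real N powr \<beta>) *\<^sub>R x) ((1 / real N powr \<beta>) *\<^sub>R y)"
    using lipschitz_onD[OF assms(1)] by simp
  also have "\<dots> = L / real N powr \<beta> * dist x y"
    by (simp add: dist_norm flip: scaleR_diff_right)
  finally have "real N powr (-\<alpha>) *
        dist (K ((1 / real N powr \<beta>) *\<^sub>R x)) (K ((1 / real N powr \<beta>) *\<^sub>R y))
      \<le> real N powr (-\<alpha>) * (L / real N powr \<beta> * dist x y)"
    by (intro mult_left_mono) auto
  then show "dist (scaled_kernel K N \<alpha> \<beta> x) (scaled_kernel K N \<alpha> \<beta> y)
      \<le> real N powr (-\<alpha>) * L / real N powr \<beta> * dist x y"
    unfolding scaled_kernel_def dist_norm by (simp flip: scaleR_diff_right)
qed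

lemma norm_scaled_kernel_le:
  assumes "\<And>z. norm (K z) \<le> B"
  shows "norm (scaled_kernel K N \<alpha> \<beta> z) \<le> real N powr (-\<alpha>) * B"
  unfolding scaled_kernel_def using assms by (simp add: mult_left_mono)

lemma scaled_kernel_rescale:
  assumes "0 < N" and "\<alpha> + \<beta> = \<alpha>' + \<beta>'"
  shows "scaled_kernel K N \<alpha>' \<beta>' (real N powr (\<beta>' - \<beta>) *\<^sub>R z)
           = real N powr (\<beta>' - \<beta>) *\<^sub>R scaled_kernel K N \<alpha> \<beta> z"
proof -
  have "real N powr (\<beta>' - \<beta>) * real N powr (-\<alpha>) = real N powr (-\<alpha>')"
    using assms by (simp flip: powr_add) (simp add: algebra_simps)
  moreover have "real N powr (\<beta>' - \<beta>) / real N powr \<beta>' = 1 / real N powr \<beta>"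
    using assms(1) by (simp add: powr_diff)
  ultimately show ?thesis
    unfolding scaled_kernel_def by (simp add: mult.assoc[symmetric])
qed

lemma is_solution_pushforward_scaleR:
  fixes K K' :: "'a::euclidean_space \<Rightarrow> 'a"
  assumes \<mu>_sol: "is_solution T N K \<mu>0 \<mu>"
    and \<nu>_sol: "is_solution T N K' (distr \<mu>0 borel (\<lambda>z. c *\<^sub>R z)) \<nu>"
    and fin: "finite_measure \<mu>0" and sets: "sets \<mu>0 = sets borel"
    and K: "K \<in> borel_measurable borel" and lip: "L-lipschitz_on UNIV K'"
    and bdd: "\<And>z. norm (K' z) \<le> B" and rescale: "\<And>z. K' (c *\<^sub>R z) = c *\<^sub>R K z"
    and t: "t \<in> {0..T}"
  shows "\<nu> t = distr (\<mu> t) borel (\<lambda>z. c *\<^sub>R z)"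
proof -
  define U where "U = (\<lambda>z::'a. c *\<^sub>R z)"
  have U: "U \<in> borel_measurable borel" unfolding U_def by simp
  have K': "K' \<in> borel_measurable borel"
    using lip by (intro borel_measurable_continuous_onI lipschitz_on_continuous_on)
  obtain \<gamma> where \<gamma>: "lagrangian_solution T K \<mu>0 (\<lambda>x. x) \<gamma>"
    and \<mu>: "\<And>t. t \<in> {0..T} \<Longrightarrow> \<mu> t = distr \<mu>0 borel (\<gamma> t)"
    using is_solution_imp_lagrangian_solution[OF \<mu>_sol] by blast
  obtain \<eta> where \<eta>: "lagrangian_solution T K' (distr \<mu>0 borel U) (\<lambda>x. x) \<eta>"
    and \<nu>: "\<And>t. t \<in> {0..T} \<Longrightarrow> \<nu> t = distr (distr \<mu>0 borel U) borel (\<eta> t)"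
    using is_solution_imp_lagrangian_solution[OF \<nu>_sol] unfolding U_def by blast
  have \<eta>U: "lagrangian_solution T K' \<mu>0 U (\<lambda>t x. \<eta> t (U x))"
    using lagrangian_solution_precompose[OF \<eta> sets U] by simp
  have U\<gamma>: "lagrangian_solution T K' \<mu>0 U (\<lambda>t x. U (\<gamma> t x))"
    using lagrangian_solution_scaleR[OF \<gamma> sets K K' rescale] unfolding U_def .
  have "\<eta> t \<circ> U = U \<circ> \<gamma> t"
    using lagrangian_solution_unique[OF \<eta>U U\<gamma> fin sets lip bdd t] by (simp add: fun_eq_iff)
  moreover have "\<eta> t \<in> borel_measurable borel" "\<gamma> t \<in> borel_measurable borel"
    using \<eta> \<gamma> t unfolding lagrangian_solution_def by auto
  ultimately show ?thesis
    using \<nu>[OF t] \<mu>[OF t] U sets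
    by (simp add: distr_distr measurable_cong_sets[OF sets refl] flip: U_def)
qed

theorem mainTheorem7:
  fixes Kc :: "'a::euclidean_space \<Rightarrow> 'a"
    and N :: nat and T R L \<alpha> \<beta> \<alpha>' \<beta>' :: real
    and \<mu>0 :: "'a measure" and \<mu> \<nu> :: "real \<Rightarrow> 'a measure"
  assumes "N \<ge> 1" and "T > 0"
    and "L-lipschitz_on UNIV Kc"
    and "R > 0" and "\<forall>z. z \<notin> ball 0 R \<longrightarrow> Kc z = 0"
    and "\<alpha> + \<beta> = \<alpha>' + \<beta>'"
    and "\<mu>0 \<in> meas_N1 N"
    and "distr \<mu>0 borel (\<lambda>z. (real N powr (\<beta>' - \<beta>)) *\<^sub>R z) \<in> meas_N1 N"
    and "is_solution T N (scaled_kernel Kc N \<alpha> \<beta>) \<mu>0 \<mu>"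
    and "is_solution T N (scaled_kernel Kc N \<alpha>' \<beta>')
           (distr \<mu>0 borel (\<lambda>z. (real N powr (\<beta>' - \<beta>)) *\<^sub>R z)) \<nu>"
  shows "\<forall>t\<in>{0<..T}. \<nu> t = distr (\<mu> t) borel (\<lambda>z. (real N powr (\<beta>' - \<beta>)) *\<^sub>R z)"
proof
  fix t assume "t \<in> {0<..T}"
  then have t: "t \<in> {0..T}" by simp
  have N: "0 < N" and sets: "sets \<mu>0 = sets borel" and fin: "finite_measure \<mu>0"
    using assms(1,7) by (auto simp: meas_N1_def intro: finite_measureI)
  have lip: "(real N powr (-\<alpha>') * L / real N powr \<beta>')-lipschitz_on UNIV (scaled_kernel Kc N \<alpha>' \<beta>')"
    by (rule lipschitz_on_scaled_kernel[OF assms(3) N])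
  have meas: "scaled_kernel Kc N \<alpha> \<beta> \<in> borel_measurable borel"
    using lipschitz_on_scaled_kernel[OF assms(3) N]
    by (intro borel_measurable_continuous_onI lipschitz_on_continuous_on)
  have bdd: "norm (scaled_kernel Kc N \<alpha>' \<beta>' z) \<le> real N powr (-\<alpha>') * (norm (Kc 0) + L * R)" for z
    by (intro norm_scaled_kernel_le norm_le_of_lipschitz_vanishing_outside_ball[OF assms(3,5,4)])
  show "\<nu> t = distr (\<mu> t) borel (\<lambda>z. real N powr (\<beta>' - \<beta>) *\<^sub>R z)"
    using assms(9,10) fin sets meas lip bdd scaled_kernel_rescale[OF N assms(6)] t
    by (rule is_solution_pushforward_scaleR)
qed

end
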